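(* Let $E$ be a set, let $\Sigma^{(0)}_E$ be the group of permutations of $E$ fixing all but finitely many elements of $E$, and let $\Sigma_E$ be the set of virtual permutations of $E$. For every $g \in \Sigma^{(0)}_E$ and every $\sigma = (\sigma_I)_{I \in \mathcal{F}(E)} \in \Sigma_E$, there exists a unique virtual permutation $g\sigma g^{-1} = (\sigma'_I)_{I \in \mathcal{F}(E)} \in \Sigma_E$ such that $\sigma'_I = g_I \sigma_I g_I^{-1}$ for every finite $I \subset E$ containing all points of $E$ not fixed by $g$, where $g_I$ denotes the restriction of $g$ to $I$. The map $(g,\sigma) \mapsto g\sigma g^{-1}$ is a group action of $\Sigma^{(0)}_E$ on $\Sigma_E$, and the cycles of $g\sigma g^{-1}$ are the images by $g$ of the cycles of $\sigma$.
   Context: $\mathcal{F}(E)$ denotes the set of finite subsets of $E$, $\Sigma_I$ the symmetric group of a finite set $I$. For finite $I \subset J$ and $\tau \in \Sigma_J$, $\pi_{J,I}(\tau) \in \Sigma_I$ ("removing the elements of $J\setminus I$ from the cycle structure of $\tau$") is defined by $\pi_{J,I}(\tau)(x) = \tau^m(x)$ with $m\geq 1$ minimal such that $\tau^m(x) \in I$. A virtual permutation of $E$ is a family $(\sigma_I)_{I \in \mathcal{F}(E)}$ with $\sigma_I \in \Sigma_I$ and $\sigma_I = \pi_{J,I}(\sigma_J)$ for all finite $I \subset J$. For a virtual permutation $\sigma$, two elements $x,y \in E$ are equivalent if they lie in the same cycle of $\sigma_I$ for some (equivalently, every) finite $I$ containing both; the equivalence classes are called the cycles of $\sigma$. *)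

theory Defs
  imports "HOL-Combinatorics.Permutations"
begin

definition proj_perm :: "'a set \<Rightarrow> 'a set \<Rightarrow> ('a \<Rightarrow> 'a) \<Rightarrow> ('a \<Rightarrow> 'a)" where
  "proj_perm J I \<tau> = (\<lambda>x. if x \<in> I then (\<tau> ^^ (LEAST m. 0 < m \<and> (\<tau> ^^ m) x \<in> I)) x else x)"

text \<open>Convention: the family is extended by the identity at indices that are not finite
  subsets of E, so that a virtual permutation is determined by its values on F(E).\<close>
definition virtual_perm :: "'a set \<Rightarrow> ('a set \<Rightarrow> 'a \<Rightarrow> 'a) \<Rightarrow> bool" where
  "virtual_perm E \<sigma> \<longleftrightarrow>
     (\<forall>I. finite I \<and> I \<subseteq> E \<longrightarrow> \<sigma> I permutes I) \<and>
     (\<forall>I. \<not> (finite I \<and> I \<subseteq> E) \<longrightarrow> \<sigma> I = id) \<and>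
     (\<forall>I J. finite J \<and> J \<subseteq> E \<and> I \<subseteq> J \<longrightarrow> \<sigma> I = proj_perm J I (\<sigma> J))"

definition fin_perm :: "'a set \<Rightarrow> ('a \<Rightarrow> 'a) \<Rightarrow> bool" where
  "fin_perm E g \<longleftrightarrow> g permutes E \<and> finite {x. g x \<noteq> x}"

definition restr_perm :: "('a \<Rightarrow> 'a) \<Rightarrow> 'a set \<Rightarrow> 'a \<Rightarrow> 'a" where
  "restr_perm g I = (\<lambda>x. if x \<in> I then g x else x)"

definition is_conj_vp :: "'a set \<Rightarrow> ('a \<Rightarrow> 'a) \<Rightarrow> ('a set \<Rightarrow> 'a \<Rightarrow> 'a) \<Rightarrow> ('a set \<Rightarrow> 'a \<Rightarrow> 'a) \<Rightarrow> bool" where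
  "is_conj_vp E g \<sigma> \<sigma>' \<longleftrightarrow> virtual_perm E \<sigma>' \<and>
     (\<forall>I. finite I \<and> I \<subseteq> E \<and> {x. g x \<noteq> x} \<subseteq> I \<longrightarrow>
        \<sigma>' I = restr_perm g I \<circ> \<sigma> I \<circ> inv (restr_perm g I))"

definition conj_vp :: "'a set \<Rightarrow> ('a \<Rightarrow> 'a) \<Rightarrow> ('a set \<Rightarrow> 'a \<Rightarrow> 'a) \<Rightarrow> ('a set \<Rightarrow> 'a \<Rightarrow> 'a)" where
  "conj_vp E g \<sigma> = (THE \<sigma>'. is_conj_vp E g \<sigma> \<sigma>')"

definition same_cycle :: "('a \<Rightarrow> 'a) \<Rightarrow> 'a \<Rightarrow> 'a \<Rightarrow> bool" where
  "same_cycle p x y \<longleftrightarrow> (\<exists>n. (p ^^ n) x = y)"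

definition vp_rel :: "'a set \<Rightarrow> ('a set \<Rightarrow> 'a \<Rightarrow> 'a) \<Rightarrow> ('a \<times> 'a) set" where
  "vp_rel E \<sigma> = {(x, y). x \<in> E \<and> y \<in> E \<and>
      (\<exists>I. finite I \<and> I \<subseteq> E \<and> x \<in> I \<and> y \<in> I \<and> same_cycle (\<sigma> I) x y)}"

definition vp_cycles :: "'a set \<Rightarrow> ('a set \<Rightarrow> 'a \<Rightarrow> 'a) \<Rightarrow> 'a set set" where
  "vp_cycles E \<sigma> = E // vp_rel E \<sigma>"

end

theory Submission
  imports Defs "HOL-Combinatorics.Cycles"
begin

text \<open>The projection \<open>\<pi>_{J,I}(\<tau>)\<close> is the first-return map of \<open>\<tau>\<close> to \<open>I\<close>. It is again a
  permutation, and the iterates of \<open>\<pi>_{K,J}(\<tau>)\<close> at a point of \<open>J\<close> run through the points of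
  its \<open>\<tau>\<close>-orbit that lie in \<open>J\<close>, in order of appearance; hence \<open>\<pi>_{J,I} \<circ> \<pi>_{K,J} = \<pi>_{K,I}\<close>.
  First-return maps to \<open>I\<close> also commute with conjugation by permutations of \<open>I\<close>. So if \<open>S\<close> is
  the finite support of \<open>g\<close>, the family \<open>g \<sigma>_I g\<inverse>\<close> indexed by the finite \<open>I \<supseteq> S\<close> is
  compatible, and projecting from \<open>I \<union> S\<close> extends it to a virtual permutation, unique because
  these \<open>I\<close> are cofinal among the finite subsets of \<open>E\<close>. The action laws and the description
  of the cycles are then checked on one large finite set \<open>K\<close>, where
  \<open>(g \<sigma>_K g\<inverse>)\<^sup>n (g x) = g (\<sigma>_K\<^sup>n x)\<close>.\<close>

lemma proj_perm_outside [simp]: "x \<notin> I \<Longrightarrow> proj_perm J I \<tau> x = x"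
  by (simp add: proj_perm_def)

lemma proj_perm_first_return:
  assumes "\<tau> permutes K" "finite K" "x \<in> I"
  defines "m \<equiv> LEAST m. 0 < m \<and> (\<tau> ^^ m) x \<in> I"
  shows "0 < m" "(\<tau> ^^ m) x \<in> I" "\<And>j. 0 < j \<Longrightarrow> j < m \<Longrightarrow> (\<tau> ^^ j) x \<notin> I"
    and "proj_perm J I \<tau> x = (\<tau> ^^ m) x"
proof -
  obtain n where "\<tau> ^^ n = id" "0 < n"
    using assms(1,2) permutation_is_nilpotent permutation_permutes by blast
  then have "0 < n \<and> (\<tau> ^^ n) x \<in> I"
    using assms(3) by simp
  then have "0 < m \<and> (\<tau> ^^ m) x \<in> I"
    unfolding m_def by (rule LeastI)
  then show "0 < m" "(\<tau> ^^ m) x \<in> I" "proj_perm J I \<tau> x = (\<tau> ^^ m) x"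
    using assms(3) by (simp_all add: proj_perm_def m_def)
  show "\<And>j. 0 < j \<Longrightarrow> j < m \<Longrightarrow> (\<tau> ^^ j) x \<notin> I"
    unfolding m_def using not_less_Least by blast
qed

lemma proj_perm_eqI:
  assumes "x \<in> I" "0 < M" "(\<tau> ^^ M) x \<in> I" "\<And>j. 0 < j \<Longrightarrow> j < M \<Longrightarrow> (\<tau> ^^ j) x \<notin> I"
  shows "proj_perm J I \<tau> x = (\<tau> ^^ M) x"
proof -
  have "(LEAST m. 0 < m \<and> (\<tau> ^^ m) x \<in> I) = M"
    by (rule Least_equality) (use assms in \<open>auto simp: not_less[symmetric]\<close>)
  then show ?thesis
    using assms(1) by (simp add: proj_perm_def)
qed

lemma proj_perm_in:
  "\<tau> permutes K \<Longrightarrow> finite K \<Longrightarrow> x \<in> I \<Longrightarrow> proj_perm J I \<tau> x \<in> I"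
  using proj_perm_first_return(2,4) by metis

lemma funpow_proj_perm_in:
  "\<tau> permutes K \<Longrightarrow> finite K \<Longrightarrow> x \<in> I \<Longrightarrow> (proj_perm J I \<tau> ^^ k) x \<in> I"
  by (induction k) (simp_all add: proj_perm_in)

lemma first_return_eq_imp_eq:
  assumes "inj \<tau>" "x \<in> I" "0 < a" "a \<le> b" "(\<tau> ^^ a) x = (\<tau> ^^ b) y"
    and "\<And>j. 0 < j \<Longrightarrow> j < b \<Longrightarrow> (\<tau> ^^ j) y \<notin> I"
  shows "x = y"
proof -
  have "(\<tau> ^^ a) x = (\<tau> ^^ a) ((\<tau> ^^ (b - a)) y)"
    using assms(4,5) by (metis funpow_add le_add_diff_inverse comp_apply)
  then have "x = (\<tau> ^^ (b - a)) y"
    using inj_fn[OF assms(1)] by (metis injD)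
  then show ?thesis
    using assms(2-4) assms(6)[of "b - a"] by (cases "b = a") auto
qed

lemma inj_on_proj_perm:
  assumes "\<tau> permutes K" "finite K"
  shows "inj_on (proj_perm J I \<tau>) I"
proof (rule inj_onI)
  fix x y assume x: "x \<in> I" and y: "y \<in> I" and eq: "proj_perm J I \<tau> x = proj_perm J I \<tau> y"
  define a where "a = (LEAST m. 0 < m \<and> (\<tau> ^^ m) x \<in> I)"
  define b where "b = (LEAST m. 0 < m \<and> (\<tau> ^^ m) y \<in> I)"
  note A = proj_perm_first_return[OF assms x, folded a_def]
  note B = proj_perm_first_return[OF assms y, folded b_def]
  have "inj \<tau>" and "(\<tau> ^^ a) x = (\<tau> ^^ b) y"
    using assms(1) A(4) B(4) eq by (simp_all add: permutes_inj)
  then show "x = y"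
    using first_return_eq_imp_eq[of \<tau> x I a b y] first_return_eq_imp_eq[of \<tau> y I b a x]
      x y A(1,3) B(1,3) by (cases "a \<le> b") auto
qed

lemma proj_perm_permutes:
  assumes "\<tau> permutes K" "finite K" "finite I"
  shows "proj_perm J I \<tau> permutes I"
proof (rule bij_imp_permutes)
  have "proj_perm J I \<tau> ` I = I"
    using endo_inj_surj[OF assms(3) _ inj_on_proj_perm[OF assms(1,2)]] proj_perm_in[OF assms(1,2)]
    by blast
  then show "bij_betw (proj_perm J I \<tau>) I I"
    using inj_on_proj_perm[OF assms(1,2)] by (simp add: bij_betw_def)
qed simp

lemma funpow_proj_perm_visits:
  assumes "\<tau> permutes K" "finite K" "x \<in> J"
  shows "\<exists>M. (\<tau> ^^ M) x = (proj_perm A J \<tau> ^^ k) x \<and> (0 < k \<longleftrightarrow> 0 < M) \<and>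
    (\<forall>j. 0 < j \<and> j < M \<and> (\<tau> ^^ j) x \<in> J \<longrightarrow> (\<exists>i. 0 < i \<and> i < k \<and> (\<tau> ^^ j) x = (proj_perm A J \<tau> ^^ i) x))"
proof (induction k)
  case 0
  show ?case by (intro exI[of _ 0]) simp
next
  case (Suc k)
  let ?p = "proj_perm A J \<tau>"
  from Suc obtain M where M: "(\<tau> ^^ M) x = (?p ^^ k) x" "0 < k \<longleftrightarrow> 0 < M"
    and visits: "\<And>j. 0 < j \<Longrightarrow> j < M \<Longrightarrow> (\<tau> ^^ j) x \<in> J \<Longrightarrow> \<exists>i. 0 < i \<and> i < k \<and> (\<tau> ^^ j) x = (?p ^^ i) x"
    by blast
  define z where "z = (?p ^^ k) x"
  have "z \<in> J"
    unfolding z_def using funpow_proj_perm_in[OF assms] .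
  define m where "m = (LEAST m. 0 < m \<and> (\<tau> ^^ m) z \<in> J)"
  note S = proj_perm_first_return[OF assms(1,2) \<open>z \<in> J\<close>, folded m_def]
  have step: "(\<tau> ^^ (m + M)) x = (?p ^^ Suc k) x"
    using S(4) M(1) by (simp add: z_def funpow_add)
  have "\<exists>i. 0 < i \<and> i < Suc k \<and> (\<tau> ^^ j) x = (?p ^^ i) x"
    if j: "0 < j" "j < m + M" "(\<tau> ^^ j) x \<in> J" for j
  proof (cases "j \<le> M")
    case True
    then show ?thesis
      using visits[OF j(1) _ j(3)] M j(1) by (cases "j = M") (auto intro: less_SucI)
  next
    case False
    then have "(\<tau> ^^ j) x = (\<tau> ^^ (j - M)) z"
      using M(1) z_def by (metis funpow_add le_add_diff_inverse2 nat_le_linear comp_apply)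
    moreover have "0 < j - M" "j - M < m"
      using False j(2) by auto
    ultimately show ?thesis
      using S(3) j(3) by auto
  qed
  moreover have "0 < m + M"
    using S(1) by simp
  ultimately show ?case
    using step by blast
qed

text \<open>The first argument of \<open>proj_perm\<close> does not enter its definition, hence the
  unrelated \<open>A\<close>, \<open>B\<close>, \<open>C\<close>.\<close>

lemma proj_perm_proj_perm:
  assumes "\<tau> permutes K" "finite K" "finite J" "I \<subseteq> J"
  shows "proj_perm B I (proj_perm A J \<tau>) = proj_perm C I \<tau>"
proof
  fix x
  show "proj_perm B I (proj_perm A J \<tau>) x = proj_perm C I \<tau> x"
  proof (cases "x \<in> I")
    case True
    let ?p = "proj_perm A J \<tau>"
    define k where "k = (LEAST m. 0 < m \<and> (?p ^^ m) x \<in> I)"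
    note S = proj_perm_first_return[OF proj_perm_permutes[OF assms(1-3), where J = A] assms(3) True, folded k_def]
    have "x \<in> J"
      using True assms(4) by blast
    from funpow_proj_perm_visits[OF assms(1,2) this, where A = A and k = k]
    obtain M where M: "(\<tau> ^^ M) x = (?p ^^ k) x" "0 < k \<longleftrightarrow> 0 < M"
      and visits: "\<forall>j. 0 < j \<and> j < M \<and> (\<tau> ^^ j) x \<in> J \<longrightarrow> (\<exists>i. 0 < i \<and> i < k \<and> (\<tau> ^^ j) x = (?p ^^ i) x)"
      by (elim exE conjE) (rule that)
    have "(\<tau> ^^ j) x \<notin> I" if "0 < j" "j < M" for j
    proof
      assume in_I: "(\<tau> ^^ j) x \<in> I"
      with assms(4) visits that have "\<exists>i. 0 < i \<and> i < k \<and> (\<tau> ^^ j) x = (?p ^^ i) x"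
        by blast
      then obtain i where i: "0 < i" "i < k" and eq: "(\<tau> ^^ j) x = (?p ^^ i) x"
        by (elim exE conjE)
      show False
        using S(3)[OF i] in_I eq by simp
    qed
    then have "proj_perm C I \<tau> x = (\<tau> ^^ M) x"
      using True M S(1,2) by (intro proj_perm_eqI) auto
    then show ?thesis
      using S(4) M(1) by simp
  qed simp
qed

lemma funpow_conj:
  assumes "f permutes I"
  shows "(f \<circ> \<tau> \<circ> inv f) ^^ n = f \<circ> \<tau> ^^ n \<circ> inv f"
  by (induction n) (simp_all add: fun_eq_iff permutes_inverses[OF assms])

lemma proj_perm_conj:
  assumes "f permutes I"
  shows "proj_perm A I (f \<circ> \<tau> \<circ> inv f) = f \<circ> proj_perm B I \<tau> \<circ> inv f"
proof
  fix x
  have inv_in: "inv f x \<in> I \<longleftrightarrow> x \<in> I"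
    using permutes_in_image[OF permutes_inv[OF assms]] by simp
  show "proj_perm A I (f \<circ> \<tau> \<circ> inv f) x = (f \<circ> proj_perm B I \<tau> \<circ> inv f) x"
  proof (cases "x \<in> I")
    case True
    have pow: "((f \<circ> \<tau> \<circ> inv f) ^^ m) x = f ((\<tau> ^^ m) (inv f x))" for m
      using funpow_conj[OF assms] by simp
    have "(LEAST m. 0 < m \<and> ((f \<circ> \<tau> \<circ> inv f) ^^ m) x \<in> I) = (LEAST m. 0 < m \<and> (\<tau> ^^ m) (inv f x) \<in> I)"
      unfolding pow permutes_in_image[OF assms] ..
    then show ?thesis
      unfolding proj_perm_def using True inv_in pow by simp
  next
    case False
    then show ?thesis
      using inv_in by (simp add: permutes_inverses[OF assms])
  qed
qed

lemma fin_perm_support_subset: "fin_perm E g \<Longrightarrow> {x. g x \<noteq> x} \<subseteq> E"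
  unfolding fin_perm_def using permutes_not_in by fastforce

lemma fin_perm_permutes_superset:
  "fin_perm E g \<Longrightarrow> {x. g x \<noteq> x} \<subseteq> K \<Longrightarrow> g permutes K"
  unfolding fin_perm_def using permutes_superset by blast

lemma restr_perm_eq: "{x. g x \<noteq> x} \<subseteq> I \<Longrightarrow> restr_perm g I = g"
  unfolding restr_perm_def by force

lemma fin_perm_id: "fin_perm E id"
  unfolding fin_perm_def by (simp add: permutes_id)

lemma fin_perm_comp:
  assumes "fin_perm E g" "fin_perm E h"
  shows "fin_perm E (g \<circ> h)"
proof -
  have "{x. (g \<circ> h) x \<noteq> x} \<subseteq> {x. g x \<noteq> x} \<union> {x. h x \<noteq> x}"
    by auto
  then show ?thesis
    using assms finite_subset unfolding fin_perm_def by (auto intro: permutes_compose)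
qed

lemma fin_perm_inv:
  assumes "fin_perm E g"
  shows "fin_perm E (inv g)"
proof -
  have "g permutes E"
    using assms unfolding fin_perm_def by simp
  then have "{x. inv g x \<noteq> x} = {x. g x \<noteq> x}"
    using permutes_inv_eq by metis
  then show ?thesis
    using assms permutes_inv unfolding fin_perm_def by auto
qed

lemma virtual_perm_permutes:
  "virtual_perm E \<sigma> \<Longrightarrow> finite I \<Longrightarrow> I \<subseteq> E \<Longrightarrow> \<sigma> I permutes I"
  unfolding virtual_perm_def by blast

lemma virtual_perm_proj:
  "virtual_perm E \<sigma> \<Longrightarrow> finite J \<Longrightarrow> J \<subseteq> E \<Longrightarrow> I \<subseteq> J \<Longrightarrow> \<sigma> I = proj_perm J I (\<sigma> J)"
  unfolding virtual_perm_def by blast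

lemma virtual_perm_eqI:
  assumes "virtual_perm E \<sigma>" "virtual_perm E \<sigma>'" "finite S" "S \<subseteq> E"
    and "\<And>K. finite K \<Longrightarrow> K \<subseteq> E \<Longrightarrow> S \<subseteq> K \<Longrightarrow> \<sigma> K = \<sigma>' K"
  shows "\<sigma> = \<sigma>'"
proof
  fix I
  show "\<sigma> I = \<sigma>' I"
  proof (cases "finite I \<and> I \<subseteq> E")
    case True
    then have IS: "finite (I \<union> S)" "I \<union> S \<subseteq> E" "I \<subseteq> I \<union> S"
      using assms(3,4) by auto
    then have "\<sigma> (I \<union> S) = \<sigma>' (I \<union> S)"
      using assms(5) by blast
    then show ?thesis
      using virtual_perm_proj[OF assms(1) IS] virtual_perm_proj[OF assms(2) IS] by simp
  next
    case False
    then show ?thesis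
      using assms(1,2) unfolding virtual_perm_def by simp
  qed
qed

lemma is_conj_vp_unique:
  assumes "fin_perm E g" "is_conj_vp E g \<sigma> \<sigma>\<^sub>1" "is_conj_vp E g \<sigma> \<sigma>\<^sub>2"
  shows "\<sigma>\<^sub>1 = \<sigma>\<^sub>2"
  using assms fin_perm_support_subset[OF assms(1)]
  by (intro virtual_perm_eqI[where S = "{x. g x \<noteq> x}"]) (auto simp: is_conj_vp_def fin_perm_def)

lemma virtual_perm_extend:
  assumes S: "finite S" "S \<subseteq> E"
    and perm: "\<And>K. finite K \<Longrightarrow> K \<subseteq> E \<Longrightarrow> S \<subseteq> K \<Longrightarrow> T K permutes K"
    and compat: "\<And>I K. finite K \<Longrightarrow> K \<subseteq> E \<Longrightarrow> S \<subseteq> I \<Longrightarrow> I \<subseteq> K \<Longrightarrow> T I = proj_perm K I (T K)"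
  defines "\<sigma> \<equiv> \<lambda>I. if finite I \<and> I \<subseteq> E then proj_perm (I \<union> S) I (T (I \<union> S)) else id"
  shows "virtual_perm E \<sigma>" and "\<And>I. finite I \<Longrightarrow> I \<subseteq> E \<Longrightarrow> S \<subseteq> I \<Longrightarrow> \<sigma> I = T I"
proof -
  have \<sigma>_proj: "\<sigma> I = proj_perm K I (T K)" if K: "finite K" "K \<subseteq> E" "I \<union> S \<subseteq> K" for I K
  proof -
    have I: "finite I" "I \<subseteq> E" "finite (I \<union> S)" and "S \<subseteq> K"
      using K S finite_subset by auto
    then have "\<sigma> I = proj_perm (I \<union> S) I (proj_perm K (I \<union> S) (T K))"
      using compat[OF K(1,2) Un_upper2 K(3)] unfolding \<sigma>_def by simp
    then show ?thesis
      using proj_perm_proj_perm[OF perm[OF K(1,2) \<open>S \<subseteq> K\<close>] K(1) I(3)] by simp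
  qed
  show "virtual_perm E \<sigma>"
    unfolding virtual_perm_def
  proof (intro conjI allI impI)
    fix I assume "finite I \<and> I \<subseteq> E"
    then have IS: "finite (I \<union> S)" "I \<union> S \<subseteq> E" "S \<subseteq> I \<union> S"
      using S by auto
    then show "\<sigma> I permutes I"
      using \<sigma>_proj[OF IS(1,2)] proj_perm_permutes[OF perm[OF IS]] \<open>finite I \<and> I \<subseteq> E\<close> by simp
  next
    fix I J assume IJ: "finite J \<and> J \<subseteq> E \<and> I \<subseteq> J"
    then have JS: "finite (J \<union> S)" "J \<union> S \<subseteq> E" "S \<subseteq> J \<union> S"
      using S by auto
    have "I \<union> S \<subseteq> J \<union> S"
      using IJ by blast
    then have "\<sigma> I = proj_perm (J \<union> S) I (T (J \<union> S))"
      by (rule \<sigma>_proj[OF JS(1,2)])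
    moreover have "\<sigma> J = proj_perm (J \<union> S) J (T (J \<union> S))"
      by (rule \<sigma>_proj[OF JS(1,2) order_refl])
    ultimately show "\<sigma> I = proj_perm J I (\<sigma> J)"
      using IJ proj_perm_proj_perm[OF perm[OF JS] JS(1), of J I J "J \<union> S" "J \<union> S"] by simp
  next
    fix I assume "\<not> (finite I \<and> I \<subseteq> E)"
    then show "\<sigma> I = id"
      unfolding \<sigma>_def by auto
  qed
  show "\<sigma> I = T I" if "finite I" "I \<subseteq> E" "S \<subseteq> I" for I
    using \<sigma>_proj[OF that(1,2)] compat[OF that order_refl] that(3) by simp
qed

lemma fin_perm_conj_permutes:
  assumes "fin_perm E g" "virtual_perm E \<sigma>" "finite K" "K \<subseteq> E" "{x. g x \<noteq> x} \<subseteq> K"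
  shows "g \<circ> \<sigma> K \<circ> inv g permutes K"
  using fin_perm_permutes_superset[OF assms(1,5)] virtual_perm_permutes[OF assms(2-4)]
  by (intro permutes_compose permutes_inv)

lemma is_conj_vp_exists:
  assumes g: "fin_perm E g" and \<sigma>: "virtual_perm E \<sigma>"
  shows "\<exists>\<sigma>'. is_conj_vp E g \<sigma> \<sigma>'"
proof -
  let ?S = "{x. g x \<noteq> x}"
  have S: "finite ?S" "?S \<subseteq> E"
    using g fin_perm_support_subset[OF g] unfolding fin_perm_def by auto
  have compat: "g \<circ> \<sigma> I \<circ> inv g = proj_perm K I (g \<circ> \<sigma> K \<circ> inv g)"
    if "finite K" "K \<subseteq> E" "?S \<subseteq> I" "I \<subseteq> K" for I K
    using virtual_perm_proj[OF \<sigma> that(1,2,4)] proj_perm_conj[OF fin_perm_permutes_superset[OF g that(3)]]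
    by metis
  note extension = virtual_perm_extend[OF S fin_perm_conj_permutes[OF g \<sigma>] compat]
  obtain \<sigma>' where "virtual_perm E \<sigma>'"
    and "\<And>I. finite I \<Longrightarrow> I \<subseteq> E \<Longrightarrow> ?S \<subseteq> I \<Longrightarrow> \<sigma>' I = g \<circ> \<sigma> I \<circ> inv g"
    by (rule that[OF extension])
  then have "is_conj_vp E g \<sigma> \<sigma>'"
    unfolding is_conj_vp_def by (simp add: restr_perm_eq)
  then show ?thesis
    by blast
qed

lemma is_conj_vp_ex1:
  assumes "fin_perm E g" "virtual_perm E \<sigma>"
  shows "\<exists>!\<sigma>'. is_conj_vp E g \<sigma> \<sigma>'"
  using is_conj_vp_exists[OF assms] is_conj_vp_unique[OF assms(1)] by (rule ex_ex1I)

lemma is_conj_vp_conj_vp: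
  assumes "fin_perm E g" "virtual_perm E \<sigma>"
  shows "is_conj_vp E g \<sigma> (conj_vp E g \<sigma>)"
  unfolding conj_vp_def by (rule theI'[OF is_conj_vp_ex1[OF assms]])

lemma virtual_perm_conj_vp:
  "fin_perm E g \<Longrightarrow> virtual_perm E \<sigma> \<Longrightarrow> virtual_perm E (conj_vp E g \<sigma>)"
  using is_conj_vp_conj_vp unfolding is_conj_vp_def by blast

lemma conj_vp_apply:
  assumes "fin_perm E g" "virtual_perm E \<sigma>" "finite K" "K \<subseteq> E" "{x. g x \<noteq> x} \<subseteq> K"
  shows "conj_vp E g \<sigma> K = g \<circ> \<sigma> K \<circ> inv g"
proof -
  have "conj_vp E g \<sigma> K = restr_perm g K \<circ> \<sigma> K \<circ> inv (restr_perm g K)"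
    using is_conj_vp_conj_vp[OF assms(1,2)] assms(3-5) unfolding is_conj_vp_def by blast
  then show ?thesis
    using restr_perm_eq[OF assms(5)] by simp
qed

lemma conj_vp_id:
  assumes "virtual_perm E \<sigma>"
  shows "conj_vp E id \<sigma> = \<sigma>"
proof -
  have restr_id: "restr_perm id I = id" for I
    unfolding restr_perm_def by auto
  have "is_conj_vp E id \<sigma> \<sigma>"
    using assms unfolding is_conj_vp_def by (simp add: restr_id)
  then show ?thesis
    by (rule is_conj_vp_unique[OF fin_perm_id is_conj_vp_conj_vp[OF fin_perm_id assms]])
qed

lemma conj_vp_comp:
  assumes g: "fin_perm E g" and h: "fin_perm E h" and \<sigma>: "virtual_perm E \<sigma>"
  shows "conj_vp E (g \<circ> h) \<sigma> = conj_vp E g (conj_vp E h \<sigma>)"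
proof (rule virtual_perm_eqI[where S = "{x. g x \<noteq> x} \<union> {x. h x \<noteq> x}"])
  show "finite ({x. g x \<noteq> x} \<union> {x. h x \<noteq> x})" "{x. g x \<noteq> x} \<union> {x. h x \<noteq> x} \<subseteq> E"
    using g h fin_perm_support_subset[OF g] fin_perm_support_subset[OF h]
    unfolding fin_perm_def by auto
  fix K assume K: "finite K" "K \<subseteq> E" "{x. g x \<noteq> x} \<union> {x. h x \<noteq> x} \<subseteq> K"
  have "{x. (g \<circ> h) x \<noteq> x} \<subseteq> {x. g x \<noteq> x} \<union> {x. h x \<noteq> x}"
    by auto
  then have "{x. (g \<circ> h) x \<noteq> x} \<subseteq> K"
    using K(3) by blast
  moreover have "inv (g \<circ> h) = inv h \<circ> inv g"
    using g h o_inv_distrib permutes_bij unfolding fin_perm_def by blast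
  ultimately show "conj_vp E (g \<circ> h) \<sigma> K = conj_vp E g (conj_vp E h \<sigma>) K"
    using K g h \<sigma> fin_perm_comp[OF g h]
    by (simp add: conj_vp_apply virtual_perm_conj_vp o_assoc)
qed (use g h \<sigma> in \<open>simp_all add: fin_perm_comp virtual_perm_conj_vp\<close>)

lemma conj_vp_inv:
  assumes g: "fin_perm E g" and \<sigma>: "virtual_perm E \<sigma>"
  shows "conj_vp E (inv g) (conj_vp E g \<sigma>) = \<sigma>"
proof -
  have "inv g \<circ> g = id"
    using g permutes_inv_o(2) unfolding fin_perm_def by blast
  then show ?thesis
    using conj_vp_comp[OF fin_perm_inv[OF g] g \<sigma>] conj_vp_id[OF \<sigma>] by simp
qed

lemma vp_rel_conj_vp_imageI:
  assumes g: "fin_perm E g" and \<sigma>: "virtual_perm E \<sigma>" and xy: "(x, y) \<in> vp_rel E \<sigma>"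
  shows "(g x, g y) \<in> vp_rel E (conj_vp E g \<sigma>)"
proof -
  obtain I n where I: "finite I" "I \<subseteq> E" "x \<in> I" "y \<in> I" and n: "(\<sigma> I ^^ n) x = y"
    using xy unfolding vp_rel_def same_cycle_def by blast
  define K where "K = I \<union> {x. g x \<noteq> x}"
  have K: "finite K" "K \<subseteq> E" "I \<subseteq> K" "{x. g x \<noteq> x} \<subseteq> K"
    using I g fin_perm_support_subset[OF g] unfolding K_def fin_perm_def by auto
  have gK: "g permutes K"
    using fin_perm_permutes_superset[OF g K(4)] .
  obtain M where "(\<sigma> K ^^ M) x = (proj_perm K I (\<sigma> K) ^^ n) x"
    using funpow_proj_perm_visits[OF virtual_perm_permutes[OF \<sigma> K(1,2)] K(1) I(3)] by blast
  then have "(\<sigma> K ^^ M) x = y"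
    using n virtual_perm_proj[OF \<sigma> K(1-3)] by simp
  then have "(conj_vp E g \<sigma> K ^^ M) (g x) = g y"
    using conj_vp_apply[OF g \<sigma> K(1,2,4)] funpow_conj[OF gK] permutes_inverses(2)[OF gK] by simp
  moreover have "g x \<in> K" "g y \<in> K"
    using permutes_in_image[OF gK] I K by auto
  ultimately show ?thesis
    unfolding vp_rel_def same_cycle_def using K by blast
qed

lemma vp_rel_conj_vp_iff:
  assumes g: "fin_perm E g" and \<sigma>: "virtual_perm E \<sigma>"
  shows "(g x, g y) \<in> vp_rel E (conj_vp E g \<sigma>) \<longleftrightarrow> (x, y) \<in> vp_rel E \<sigma>"
proof
  have gE: "g permutes E"
    using g unfolding fin_perm_def by simp
  assume "(g x, g y) \<in> vp_rel E (conj_vp E g \<sigma>)"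
  then have "(inv g (g x), inv g (g y)) \<in> vp_rel E (conj_vp E (inv g) (conj_vp E g \<sigma>))"
    by (rule vp_rel_conj_vp_imageI[OF fin_perm_inv[OF g] virtual_perm_conj_vp[OF g \<sigma>]])
  then show "(x, y) \<in> vp_rel E \<sigma>"
    by (simp add: conj_vp_inv[OF g \<sigma>] permutes_inverses(2)[OF gE])
qed (rule vp_rel_conj_vp_imageI[OF g \<sigma>])

lemma quotient_bij_image:
  assumes "bij_betw g A A" "R \<subseteq> A \<times> A" "R' \<subseteq> A \<times> A"
    and "\<And>x y. x \<in> A \<Longrightarrow> y \<in> A \<Longrightarrow> (g x, g y) \<in> R' \<longleftrightarrow> (x, y) \<in> R"
  shows "A // R' = (\<lambda>C. g ` C) ` (A // R)"
proof -
  have classes: "R' `` {g x} = g ` (R `` {x})" if "x \<in> A" for x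
  proof
    show "R' `` {g x} \<subseteq> g ` (R `` {x})"
    proof
      fix z assume z: "z \<in> R' `` {g x}"
      then obtain w where "w \<in> A" "z = g w"
        using assms(1,3) unfolding bij_betw_def by blast
      then show "z \<in> g ` (R `` {x})"
        using assms(4) that z by blast
    qed
  qed (use assms(2,4) that in auto)
  have "A // R' = (\<lambda>x. R' `` {x}) ` A"
    unfolding quotient_def by blast
  also have "\<dots> = (\<lambda>x. R' `` {g x}) ` A"
    using assms(1) image_image[of "\<lambda>x. R' `` {x}" g A] unfolding bij_betw_def by simp
  also have "\<dots> = (\<lambda>x. g ` (R `` {x})) ` A"
    using classes by simp
  also have "\<dots> = (\<lambda>C. g ` C) ` (A // R)"
    unfolding quotient_def by blast
  finally show ?thesis .
qed

theorem proposition2p6: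
  fixes E :: "'a set"
  shows "(\<forall>g \<sigma>. fin_perm E g \<and> virtual_perm E \<sigma> \<longrightarrow> (\<exists>!\<sigma>'. is_conj_vp E g \<sigma> \<sigma>'))
    \<and> (\<forall>g \<sigma>. fin_perm E g \<and> virtual_perm E \<sigma> \<longrightarrow> virtual_perm E (conj_vp E g \<sigma>))
    \<and> (\<forall>\<sigma>. virtual_perm E \<sigma> \<longrightarrow> conj_vp E id \<sigma> = \<sigma>)
    \<and> (\<forall>g h \<sigma>. fin_perm E g \<and> fin_perm E h \<and> virtual_perm E \<sigma> \<longrightarrow>
          conj_vp E (g \<circ> h) \<sigma> = conj_vp E g (conj_vp E h \<sigma>))
    \<and> (\<forall>g \<sigma>. fin_perm E g \<and> virtual_perm E \<sigma> \<longrightarrow>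
          vp_cycles E (conj_vp E g \<sigma>) = (\<lambda>C. g ` C) ` vp_cycles E \<sigma>)"
proof (intro conjI allI impI; (elim conjE)?)
  fix g \<sigma> assume g: "fin_perm E g" and \<sigma>: "virtual_perm E \<sigma>"
  have "bij_betw g E E"
    using g unfolding fin_perm_def by (simp add: permutes_imp_bij)
  moreover have "vp_rel E \<tau> \<subseteq> E \<times> E" for \<tau>
    unfolding vp_rel_def by auto
  ultimately show "vp_cycles E (conj_vp E g \<sigma>) = (\<lambda>C. g ` C) ` vp_cycles E \<sigma>"
    unfolding vp_cycles_def using vp_rel_conj_vp_iff[OF g \<sigma>] by (intro quotient_bij_image)
qed (simp_all add: is_conj_vp_ex1 virtual_perm_conj_vp conj_vp_id conj_vp_comp)

end
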